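(* There is a partition of $\mathbb{R}^3$ into $2^{\aleph_0}$ pairwise disjoint subsets, each of which is arcwise connected and dense in $\mathbb{R}^3$.
   Context: $\mathbb{R}^3$ carries its usual Euclidean topology. *)

theory Defs
  imports "HOL-Analysis.Analysis" "HOL-Library.Equipollence"
begin

definition arcwise_connected :: "'a::topological_space set \<Rightarrow> bool" where
  "arcwise_connected S \<longleftrightarrow>
     (\<forall>x\<in>S. \<forall>y\<in>S. x \<noteq> y \<longrightarrow>
        (\<exists>g. arc g \<and> path_image g \<subseteq> S \<and> pathstart g = x \<and> pathfinish g = y))"

end

theory Submission
  imports Defs
begin

(* Let level : R^3 -> R be  level p = p2  if p1 is rational and  level p = p2 - p3
   otherwise.  The pieces are the preimages  sheet c = level^-1 (c + Q)  of the cosets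
   of Q in R.

   The cosets of Q partition R into blocks equipollent with Q; a
      partition of an uncountable set into countable blocks has as many blocks as the
      set has points.  Since level is onto, taking preimages maps the cosets
      bijectively onto a partition of R^3, which therefore has the power of the
      continuum.
   2. Connectivity.  A sheet contains the segments along which level stays in c + Q:
      segments in the p3-direction over rational p1, segments in the (0,1,1)-direction
      over irrational p1, and segments in the p1-direction at rational height p3.
      Concatenating such segments joins every point of sheet c to (0,c,0); path
      connected sets in Euclidean space are arcwise connected.
   3. Density.  A sheet contains every point with p1 in Q and p2 in c + Q. *)

unbundle cardinal_syntax

section \<open>Counting the blocks of a partition\<close>

lemma infinite_times_countable_eqpoll:
  assumes "infinite A" "countable B" "B \<noteq> {}"
  shows "A \<times> B \<approx> A"
proof -
  have "B \<lesssim> (UNIV :: nat set)"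
    using assms(2) unfolding countable_def lepoll_def by auto
  also have "(UNIV :: nat set) \<lesssim> A"
    using assms(1) infinite_le_lepoll by blast
  finally have "|B| \<le>o |A|"
    unfolding lepoll_def by (simp add: card_of_ordLeq[symmetric])
  then have "ordIso2 |A \<times> B| |A|"
    by (rule conjunct1[OF card_of_Times_infinite[OF assms(1,3)]])
  then show ?thesis
    by (simp add: eqpoll_iff_card_of_ordIso)
qed

lemma partition_countable_blocks_eqpoll:
  assumes P: "partition_on A P" and A: "uncountable A"
    and blocks: "\<And>X. X \<in> P \<Longrightarrow> X \<approx> B" and B: "countable B" "B \<noteq> {}"
  shows "P \<approx> A"
proof -
  have "\<Union>(id ` P) \<approx> P \<times> B"
  proof (rule Union_eqpoll_Times)
    show "id X \<approx> B" if "X \<in> P" for X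
      using blocks that by simp
    show "pairwise (\<lambda>X Y. disjnt (id X) (id Y)) P"
      using partition_onD2[OF P] by (simp add: disjoint_def)
  qed
  then have AP: "A \<approx> P \<times> B"
    using partition_onD1[OF P] by simp
  have "infinite P"
  proof
    assume "finite P"
    then have "countable (P \<times> B)"
      using B(1) countable_finite by blast
    then have "countable A"
      using AP by (rule countable_eqpoll)
    with A show False by contradiction
  qed
  then have "P \<times> B \<approx> P"
    using B by (rule infinite_times_countable_eqpoll)
  with AP have "A \<approx> P"
    by (rule eqpoll_trans)
  then show ?thesis
    by (rule eqpoll_sym)
qed

lemma partition_on_vimage_surj:
  assumes "surj f" "partition_on UNIV Q"
  shows "partition_on UNIV ((-`) f ` Q)" and "(-`) f ` Q \<approx> Q"
proof -
  have nonempty: "f -` X \<noteq> {}" if "X \<in> Q" for X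
    using assms that partition_onD3 surj_vimage_empty by metis
  then have "(-`) f ` Q - {{}} = (-`) f ` Q" by blast
  then show "partition_on UNIV ((-`) f ` Q)"
    using partition_on_vimage[OF assms(2), of f] by simp
  have "inj_on ((-`) f) Q"
    by (rule inj_onI) (metis assms(1) surj_image_vimage_eq)
  then show "(-`) f ` Q \<approx> Q"
    by (rule inj_on_image_eqpoll_self)
qed

section \<open>The cosets of the rationals\<close>

definition rat_coset :: "real \<Rightarrow> real set" where
  "rat_coset c = {x. x - c \<in> \<rat>}"

lemma rat_coset_self [simp]: "c \<in> rat_coset c"
  by (simp add: rat_coset_def)

lemma rat_coset_iff: "x \<in> rat_coset c \<longleftrightarrow> x - c \<in> \<rat>"
  by (simp add: rat_coset_def)

lemma rat_coset_eq:
  assumes "x \<in> rat_coset c"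
  shows "rat_coset x = rat_coset c"
proof -
  have xc: "x - c \<in> \<rat>" using assms by (simp add: rat_coset_iff)
  have "y - x \<in> \<rat> \<longleftrightarrow> y - c \<in> \<rat>" for y
  proof
    assume "y - x \<in> \<rat>"
    then have "(y - x) + (x - c) \<in> \<rat>" using xc by (rule Rats_add)
    then show "y - c \<in> \<rat>" by simp
  next
    assume "y - c \<in> \<rat>"
    then have "(y - c) - (x - c) \<in> \<rat>" using xc by (rule Rats_diff)
    then show "y - x \<in> \<rat>" by simp
  qed
  then show ?thesis by (auto simp: rat_coset_iff)
qed

lemma partition_rat_cosets: "partition_on UNIV (range rat_coset)"
proof (rule partition_onI)
  show "\<Union>(range rat_coset) = UNIV" using rat_coset_self by blast
  show "{} \<notin> range rat_coset" using rat_coset_self by blast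
  fix X Y assume "X \<in> range rat_coset" "Y \<in> range rat_coset" "X \<noteq> Y"
  then obtain a b where X: "X = rat_coset a" and Y: "Y = rat_coset b" by blast
  show "disjnt X Y"
    unfolding disjnt_iff
  proof (intro allI notI)
    fix z assume "z \<in> X \<and> z \<in> Y"
    then have "rat_coset z = X" and "rat_coset z = Y"
      using rat_coset_eq X Y by simp_all
    with \<open>X \<noteq> Y\<close> show False by simp
  qed
qed

text \<open>Each coset is a translate of \<open>\<rat>\<close>.\<close>
lemma rat_coset_eqpoll: "rat_coset c \<approx> (\<rat> :: real set)"
proof -
  have "rat_coset c = (\<lambda>q. c + q) ` \<rat>"
  proof
    show "rat_coset c \<subseteq> (\<lambda>q. c + q) ` \<rat>"
    proof
      fix x assume "x \<in> rat_coset c"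
      then have "x - c \<in> \<rat>" by (simp add: rat_coset_iff)
      then show "x \<in> (\<lambda>q. c + q) ` \<rat>" by (rule rev_image_eqI) simp
    qed
    show "(\<lambda>q. c + q) ` \<rat> \<subseteq> rat_coset c" by (auto simp: rat_coset_iff)
  qed
  moreover have "inj_on (\<lambda>q. c + q) \<rat>" by (rule inj_onI) simp
  ultimately show ?thesis by (simp add: inj_on_image_eqpoll_self)
qed

lemma rat_cosets_eqpoll_reals: "range rat_coset \<approx> (UNIV :: real set)"
  using partition_countable_blocks_eqpoll[OF partition_rat_cosets uncountable_UNIV_real]
    rat_coset_eqpoll countable_rat by blast

section \<open>The sheets\<close>

definition level :: "real^3 \<Rightarrow> real" where
  "level p = (if p$1 \<in> \<rat> then p$2 else p$2 - p$3)"

definition sheet :: "real \<Rightarrow> (real^3) set" where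
  "sheet c = level -` rat_coset c"

lemma level_vector: "level (vector [x, y, z]) = (if x \<in> \<rat> then y else y - z)"
  by (simp add: level_def vector_3)

lemma surj_level: "surj level"
  by (rule surjI[of _ "\<lambda>y. vector [0, y, 0]"]) (simp add: level_vector)

lemma vector_3_eta: "(p :: real^3) = vector [p$1, p$2, p$3]"
  by (simp add: vec_eq_iff forall_3 vector_3)

lemma closed_segment_vector_3:
  assumes "p \<in> closed_segment (vector [a1, a2, a3]) (vector [b1, b2, b3] :: real^3)"
  obtains u where "p = vector [(1-u)*a1 + u*b1, (1-u)*a2 + u*b2, (1-u)*a3 + u*b3]"
proof -
  obtain u where "p = (1-u) *\<^sub>R vector [a1, a2, a3] + u *\<^sub>R vector [b1, b2, b3]"
    using assms unfolding closed_segment_def by auto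
  then have "p = vector [(1-u)*a1 + u*b1, (1-u)*a2 + u*b2, (1-u)*a3 + u*b3]"
    by (simp add: vec_eq_iff forall_3 vector_3)
  then show ?thesis by (rule that)
qed

text \<open>Segments in the \<open>p\<^sub>1\<close>-direction at rational height \<open>p\<^sub>3\<close>: the level is
  \<open>y\<close> or \<open>y - s\<close>, both in the coset of \<open>y\<close>.\<close>
lemma sheet_segment_p1:
  assumes "y \<in> rat_coset c" "s \<in> \<rat>"
  shows "closed_segment (vector [w1, y, s]) (vector [w2, y, s]) \<subseteq> sheet c"
proof
  fix p assume "p \<in> closed_segment (vector [w1, y, s]) (vector [w2, y, s] :: real^3)"
  then obtain u where "p = vector [(1-u)*w1 + u*w2, (1-u)*y + u*y, (1-u) * s + u * s]"
    by (rule closed_segment_vector_3)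
  then have p: "p = vector [(1-u)*w1 + u*w2, y, s]" by (simp add: algebra_simps)
  have "y - s \<in> rat_coset c"
    using assms Rats_diff[of "y - c" s] by (simp add: rat_coset_iff algebra_simps)
  then show "p \<in> sheet c"
    using assms by (simp add: sheet_def p level_vector)
qed

text \<open>Segments in the \<open>p\<^sub>3\<close>-direction over rational \<open>p\<^sub>1\<close>: the level is \<open>p\<^sub>2\<close>.\<close>
lemma sheet_segment_p3:
  assumes "q \<in> \<rat>" "y \<in> rat_coset c"
  shows "closed_segment (vector [q, y, z1]) (vector [q, y, z2]) \<subseteq> sheet c"
proof
  fix p assume "p \<in> closed_segment (vector [q, y, z1]) (vector [q, y, z2] :: real^3)"
  then obtain u where "p = vector [(1-u)*q + u*q, (1-u)*y + u*y, (1-u)*z1 + u*z2]"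
    by (rule closed_segment_vector_3)
  then have p: "p = vector [q, y, (1-u)*z1 + u*z2]" by (simp add: algebra_simps)
  show "p \<in> sheet c"
    using assms by (simp add: sheet_def p level_vector)
qed

text \<open>Segments in the \<open>(0,1,1)\<close>-direction over irrational \<open>p\<^sub>1\<close>: the level
  \<open>p\<^sub>2 - p\<^sub>3\<close> is constant.\<close>
lemma sheet_segment_diagonal:
  assumes "a \<notin> \<rat>" "y1 - z1 = y2 - z2" "y1 - z1 \<in> rat_coset c"
  shows "closed_segment (vector [a, y1, z1]) (vector [a, y2, z2]) \<subseteq> sheet c"
proof
  fix p assume "p \<in> closed_segment (vector [a, y1, z1]) (vector [a, y2, z2] :: real^3)"
  then obtain u where "p = vector [(1-u)*a + u*a, (1-u)*y1 + u*y2, (1-u)*z1 + u*z2]"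
    by (rule closed_segment_vector_3)
  then have p: "p = vector [a, (1-u)*y1 + u*y2, (1-u)*z1 + u*z2]" by (simp add: algebra_simps)
  have "(1-u)*y1 + u*y2 - ((1-u)*z1 + u*z2) = (y1 - z1) + u * ((y2 - z2) - (y1 - z1))"
    by (simp add: algebra_simps)
  then have "(1-u)*y1 + u*y2 - ((1-u)*z1 + u*z2) = y1 - z1"
    using assms(2) by simp
  then show "p \<in> sheet c"
    using assms by (simp add: sheet_def p level_vector)
qed

lemma ex_irrational: "\<exists>a::real. a \<notin> \<rat>"
  using uncountable_UNIV_real countable_rat by (metis UNIV_eq_I)

text \<open>Every point of the plane \<open>p\<^sub>3 = 0\<close> in \<open>sheet c\<close> is joined to \<open>(0,c,0)\<close>, via
  \<open>(a,y,0)\<close>, \<open>(a,c,c-y)\<close> and \<open>(0,c,c-y)\<close> for an irrational \<open>a\<close>.\<close>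
lemma sheet_path_component_plane:
  assumes y: "y \<in> rat_coset c"
  shows "path_component (sheet c) (vector [w, y, 0]) (vector [0, c, 0])"
proof -
  note path_component_trans [trans]
  obtain a :: real where a: "a \<notin> \<rat>" using ex_irrational by blast
  have r: "c - y \<in> \<rat>"
    using y Rats_minus_iff[of "y - c"] by (simp add: rat_coset_iff)
  have "path_component (sheet c) (vector [w, y, 0]) (vector [a, y, 0])"
    by (intro path_component_linepath sheet_segment_p1 y) simp
  also have "path_component (sheet c) \<dots> (vector [a, c, c - y])"
    by (intro path_component_linepath sheet_segment_diagonal a) (use y in auto)
  also have "path_component (sheet c) \<dots> (vector [0, c, c - y])"
    by (intro path_component_linepath sheet_segment_p1 r) simp
  also have "path_component (sheet c) \<dots> (vector [0, c, 0])"
    by (intro path_component_linepath sheet_segment_p3) simp_all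
  finally show ?thesis .
qed

text \<open>Every point of a sheet first moves along a level-preserving segment into the
  plane \<open>p\<^sub>3 = 0\<close>.\<close>
lemma sheet_path_component_base:
  assumes p: "p \<in> sheet c"
  shows "path_component (sheet c) p (vector [0, c, 0])"
proof -
  note path_component_trans [trans]
  obtain x y z where p_eq: "p = vector [x, y, z]"
    using vector_3_eta by blast
  show ?thesis
  proof (cases "x \<in> \<rat>")
    case True
    then have y: "y \<in> rat_coset c" using p by (simp add: sheet_def p_eq level_vector)
    have "path_component (sheet c) p (vector [x, y, 0])"
      unfolding p_eq by (intro path_component_linepath sheet_segment_p3 True y)
    also have "path_component (sheet c) \<dots> (vector [0, c, 0])"
      by (rule sheet_path_component_plane[OF y])
    finally show ?thesis .
  next
    case False
    then have y: "y - z \<in> rat_coset c" using p by (simp add: sheet_def p_eq level_vector)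
    have "path_component (sheet c) p (vector [x, y - z, 0])"
      unfolding p_eq by (intro path_component_linepath sheet_segment_diagonal False y) simp
    also have "path_component (sheet c) \<dots> (vector [0, c, 0])"
      by (rule sheet_path_component_plane[OF y])
    finally show ?thesis .
  qed
qed

lemma arcwise_connected_iff_path_connected:
  fixes S :: "'a::{complete_space,real_normed_vector} set"
  shows "arcwise_connected S \<longleftrightarrow> path_connected S"
  by (simp add: arcwise_connected_def path_connected_arcwise)

lemma sheet_arcwise_connected: "arcwise_connected (sheet c)"
  unfolding arcwise_connected_iff_path_connected path_connected_component
proof (intro ballI)
  fix p q assume "p \<in> sheet c" "q \<in> sheet c"
  then have "path_component (sheet c) p (vector [0, c, 0])"
    and "path_component (sheet c) q (vector [0, c, 0])"
    by (simp_all add: sheet_path_component_base)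
  then show "path_component (sheet c) p q"
    using path_component_trans path_component_sym by metis
qed

text \<open>Points with \<open>p\<^sub>1 \<in> \<rat>\<close> and \<open>p\<^sub>2 \<in> c + \<rat>\<close> lie in \<open>sheet c\<close> and are dense.\<close>
lemma sheet_dense: "closure (sheet c) = UNIV"
proof -
  have "p \<in> closure (sheet c)" for p :: "real^3"
    unfolding closure_approachable
  proof (intro allI impI)
    fix e :: real assume e: "e > 0"
    obtain q1 where q1: "q1 \<in> \<rat>" "p$1 < q1" "q1 < p$1 + e/2"
      using Rats_dense_in_real[of "p$1" "p$1 + e/2"] e by auto
    obtain q2 where q2: "q2 \<in> \<rat>" "p$2 - c < q2" "q2 < p$2 - c + e/2"
      using Rats_dense_in_real[of "p$2 - c" "p$2 - c + e/2"] e by auto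
    define x :: "real^3" where "x = vector [q1, c + q2, p$3]"
    have "x \<in> sheet c"
      using q1 q2 by (simp add: x_def sheet_def level_vector rat_coset_iff)
    moreover have "dist x p < e"
    proof -
      have "dist x p \<le> (\<Sum>i\<in>UNIV. \<bar>(x - p)$i\<bar>)"
        unfolding dist_norm by (rule norm_le_l1_cart)
      also have "\<dots> = \<bar>q1 - p$1\<bar> + \<bar>c + q2 - p$2\<bar>"
        by (simp add: sum_3 x_def vector_3)
      also have "\<dots> < e" using q1 q2 by auto
      finally show ?thesis .
    qed
    ultimately show "\<exists>x\<in>sheet c. dist x p < e" by blast
  qed
  then show ?thesis by auto
qed

theorem theorem1:
  shows "\<exists>P :: (real^3) set set.
           \<Union>P = UNIV \<and> {} \<notin> P \<and> disjoint P \<and>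
           P \<approx> (UNIV :: nat set set) \<and>
           (\<forall>S\<in>P. arcwise_connected S \<and> closure S = UNIV)"
proof -
  have sheets: "range sheet = (-`) level ` range rat_coset"
    unfolding sheet_def by auto
  have part: "partition_on UNIV (range sheet)"
    unfolding sheets by (rule partition_on_vimage_surj(1)[OF surj_level partition_rat_cosets])
  have "range sheet \<approx> range rat_coset"
    unfolding sheets by (rule partition_on_vimage_surj(2)[OF surj_level partition_rat_cosets])
  also note rat_cosets_eqpoll_reals
  also note nat_sets_eqpoll_reals[THEN eqpoll_sym]
  finally have card: "range sheet \<approx> (UNIV :: nat set set)" .
  show ?thesis
  proof (intro exI conjI)
    show "\<Union>(range sheet) = UNIV" using partition_onD1[OF part] by simp
    show "{} \<notin> range sheet" using partition_onD3[OF part] .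
    show "disjoint (range sheet)" using partition_onD2[OF part] .
    show "range sheet \<approx> (UNIV :: nat set set)" by (rule card)
    show "\<forall>S\<in>range sheet. arcwise_connected S \<and> closure S = UNIV"
      using sheet_arcwise_connected sheet_dense by blast
  qed
qed

end
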